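(* Let $n \ge 4$ be an even integer, let $m = \frac{n-2}{2}$, and let $G_n$ be the $n$-vertex graph obtained from two disjoint cliques $Q_1, Q_2$, each isomorphic to $K_m$, together with two non-adjacent vertices $u$ and $v$, each adjacent to every vertex of $Q_1 \cup Q_2$ (i.e., $G_n$ is the join of $2K_m$ with $2K_1$). Then $\chi_{DP}(G_n) = \frac{n}{2} + 1$.
   Context: A correspondence assignment $(L,C)$ for a graph $G$ consists of a list $L(v)$ of colors for each vertex $v$ and, for each edge $uv$, a partial matching $C_{uv}$ between $\{u\}\times L(u)$ and $\{v\}\times L(v)$. An $(L,C)$-coloring is a choice $\phi(v)\in L(v)$ for each vertex $v$ such that for every edge $uv$, the pairs $(u,\phi(u))$ and $(v,\phi(v))$ are not matched in $C_{uv}$. $G$ is $k$-correspondence-colorable if it has an $(L,C)$-coloring for every correspondence assignment with all lists of size $k$; the correspondence chromatic number $\chi_{DP}(G)$ is the least such $k$. *)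

theory Defs
  imports Main
begin

(* A graph is given by a vertex set V and a symmetric irreflexive adjacency
   relation E (only used on V). Colours are natural numbers. *)

definition corr_assignment ::
  "'a set \<Rightarrow> ('a \<Rightarrow> 'a \<Rightarrow> bool) \<Rightarrow> nat \<Rightarrow> ('a \<Rightarrow> nat set) \<Rightarrow> ('a \<Rightarrow> 'a \<Rightarrow> (nat \<times> nat) set) \<Rightarrow> bool" where
  "corr_assignment V E k L C \<longleftrightarrow>
     (\<forall>v\<in>V. finite (L v) \<and> card (L v) = k) \<and>
     (\<forall>u\<in>V. \<forall>v\<in>V. E u v \<longrightarrow>
        C u v \<subseteq> L u \<times> L v \<and> inj_on fst (C u v) \<and> inj_on snd (C u v) \<and>
        C v u = (C u v)\<inverse>)"

definition corr_coloring ::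
  "'a set \<Rightarrow> ('a \<Rightarrow> 'a \<Rightarrow> bool) \<Rightarrow> ('a \<Rightarrow> nat set) \<Rightarrow> ('a \<Rightarrow> 'a \<Rightarrow> (nat \<times> nat) set) \<Rightarrow> ('a \<Rightarrow> nat) \<Rightarrow> bool" where
  "corr_coloring V E L C \<phi> \<longleftrightarrow>
     (\<forall>v\<in>V. \<phi> v \<in> L v) \<and>
     (\<forall>u\<in>V. \<forall>v\<in>V. E u v \<longrightarrow> (\<phi> u, \<phi> v) \<notin> C u v)"

definition corr_colorable :: "'a set \<Rightarrow> ('a \<Rightarrow> 'a \<Rightarrow> bool) \<Rightarrow> nat \<Rightarrow> bool" where
  "corr_colorable V E k \<longleftrightarrow>
     (\<forall>L C. corr_assignment V E k L C \<longrightarrow> (\<exists>\<phi>. corr_coloring V E L C \<phi>))"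

definition chi_DP :: "'a set \<Rightarrow> ('a \<Rightarrow> 'a \<Rightarrow> bool) \<Rightarrow> nat" where
  "chi_DP V E = (LEAST k. corr_colorable V E k)"

(* The graph G_n on vertex set {0..<n}: u = 0, v = 1,
   Q1 = {2..<m+2}, Q2 = {m+2..<n} with m = (n-2)/2. *)
definition Gn_verts :: "nat \<Rightarrow> nat set" where
  "Gn_verts n = {0..<n}"

definition Gn_adj :: "nat \<Rightarrow> nat \<Rightarrow> nat \<Rightarrow> bool" where
  "Gn_adj n x y \<longleftrightarrow> x < n \<and> y < n \<and> x \<noteq> y \<and>
     (let m = (n - 2) div 2 in
        (x \<in> {0,1} \<and> y \<ge> 2) \<or> (y \<in> {0,1} \<and> x \<ge> 2) \<or>
        (x \<in> {2..<m+2} \<and> y \<in> {2..<m+2}) \<or>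
        (x \<in> {m+2..<n} \<and> y \<in> {m+2..<n}))"

end

theory Submission imports Defs begin

(* Upper bound: list the vertices as u, v, Q1, Q2. Every vertex then has at most m + 1 = n/2
   earlier neighbours, and an already coloured neighbour y forbids at most one colour at x
   (the partner of the colour of y in the matching C x y), so lists of size n/2 + 1 can be
   coloured greedily.
   Lower bound: take the lists {0..<n/2} and the identity matching on every edge, except on
   the edges between v and Q2, which get the cyclic shift c \<mapsto> c + 1 mod n/2. In a
   colouring, Q1 receives m distinct colours avoiding those of u and v, so u and v share a
   colour a; then Q2 receives m distinct colours avoiding both a and a + 1, which is impossible. *)

definition partial_matching :: "'c set \<Rightarrow> 'd set \<Rightarrow> ('c \<times> 'd) set \<Rightarrow> bool" where
  "partial_matching A B M \<longleftrightarrow> M \<subseteq> A \<times> B \<and> inj_on fst M \<and> inj_on snd M"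

lemma corr_assignment_iff_partial_matching:
  "corr_assignment V E k L C \<longleftrightarrow>
     (\<forall>v\<in>V. finite (L v) \<and> card (L v) = k) \<and>
     (\<forall>u\<in>V. \<forall>v\<in>V. E u v \<longrightarrow> partial_matching (L u) (L v) (C u v) \<and> C v u = (C u v)\<inverse>)"
  by (simp add: corr_assignment_def partial_matching_def)

lemma partial_matching_converse:
  assumes "partial_matching A B M"
  shows "partial_matching B A (M\<inverse>)"
proof -
  have "inj_on fst (M\<inverse>)" "inj_on snd (M\<inverse>)"
    using assms unfolding partial_matching_def
    by (auto intro!: inj_onI) (metis Pair_inject inj_onD fst_conv snd_conv)+
  then show ?thesis
    using assms by (auto simp: partial_matching_def)
qed

lemma partial_matching_Id_on: "partial_matching A A (Id_on A)"
  by (auto simp: partial_matching_def inj_on_def)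

lemma card_matched_le_1:
  assumes "inj_on snd M"
  shows "card {c. (c, d) \<in> M} \<le> 1"
proof (cases "\<exists>c. (c, d) \<in> M")
  case True
  then obtain c where "(c, d) \<in> M" by blast
  with assms have "{c. (c, d) \<in> M} \<subseteq> {c}"
    unfolding inj_on_def by fastforce
  then show ?thesis
    using card_mono[of "{c}"] by simp
qed simp

lemma corr_coloring_Id_on_neq:
  assumes "corr_coloring V E L C \<phi>" "x \<in> V" "y \<in> V" "E x y" "C x y = Id_on A" "\<phi> y \<in> A"
  shows "\<phi> x \<noteq> \<phi> y"
proof
  assume "\<phi> x = \<phi> y"
  then have "(\<phi> x, \<phi> y) \<in> C x y"
    using assms(5,6) by (simp add: Id_onI)
  with assms(1-4) show False
    by (auto simp: corr_coloring_def)
qed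

lemma corr_coloring_extend:
  assumes ca: "corr_assignment V E k L C" and "symp E" "irreflp E"
    and W: "finite W" "W \<subseteq> V" and x: "x \<in> V" "x \<notin> W"
    and few: "card {y \<in> W. E x y} < k"
    and \<phi>: "corr_coloring W E L C \<phi>"
  shows "\<exists>c. corr_coloring (insert x W) E L C (\<phi>(x := c))"
proof -
  define N where "N = {y \<in> W. E x y}"
  define F where "F = (\<Union>y\<in>N. {c. (c, \<phi> y) \<in> C x y})"
  have matching: "partial_matching (L x) (L y) (C x y) \<and> C y x = (C x y)\<inverse>" if "y \<in> N" for y
    using ca x W that by (auto simp: corr_assignment_iff_partial_matching N_def)
  have L: "finite (L x)" "card (L x) = k"
    using ca x by (auto simp: corr_assignment_def)
  have "card F \<le> (\<Sum>y\<in>N. card {c. (c, \<phi> y) \<in> C x y})"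
    unfolding F_def by (rule card_UN_le) (simp add: N_def W)
  also have "\<dots> \<le> (\<Sum>y\<in>N. 1)"
    using matching by (intro sum_mono card_matched_le_1) (simp add: partial_matching_def)
  also have "\<dots> < card (L x)"
    using few L by (simp add: N_def)
  finally have "F \<noteq> L x" by blast
  moreover have "F \<subseteq> L x"
    using matching by (fastforce simp: F_def partial_matching_def)
  ultimately obtain c where c: "c \<in> L x" "c \<notin> F" by blast
  have "corr_coloring (insert x W) E L C (\<phi>(x := c))"
    unfolding corr_coloring_def
  proof (intro conjI ballI impI)
    fix v assume "v \<in> insert x W"
    then show "(\<phi>(x := c)) v \<in> L v"
      using \<phi> c by (auto simp: corr_coloring_def)
  next
    fix u v assume uv: "u \<in> insert x W" "v \<in> insert x W" and "E u v"
    have "u \<noteq> v"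
      using \<open>E u v\<close> \<open>irreflp E\<close> by (auto dest: irreflpD)
    consider "u = x" | "v = x" | "u \<in> W" "v \<in> W"
      using uv by blast
    then show "((\<phi>(x := c)) u, (\<phi>(x := c)) v) \<notin> C u v"
    proof cases
      case 1
      then have "v \<in> N"
        using uv \<open>u \<noteq> v\<close> \<open>E u v\<close> by (simp add: N_def)
      then show ?thesis
        using 1 c \<open>u \<noteq> v\<close> by (auto simp: F_def)
    next
      case 2
      then have "u \<in> N"
        using uv \<open>u \<noteq> v\<close> \<open>E u v\<close> \<open>symp E\<close> by (auto simp: N_def dest: sympD)
      then show ?thesis
        using 2 c \<open>u \<noteq> v\<close> matching[of u] by (auto simp: F_def)
    next
      case 3
      then show ?thesis
        using \<phi> \<open>E u v\<close> x by (auto simp: corr_coloring_def)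
    qed
  qed
  then show ?thesis ..
qed

lemma corr_colorable_greedy:
  fixes E :: "nat \<Rightarrow> nat \<Rightarrow> bool"
  assumes "symp E" "irreflp E"
    and few: "\<And>x. x < n \<Longrightarrow> card {y. y < x \<and> E x y} < k"
  shows "corr_colorable {0..<n} E k"
  unfolding corr_colorable_def
proof (intro allI impI)
  fix L C assume ca: "corr_assignment {0..<n} E k L C"
  have "j \<le> n \<Longrightarrow> \<exists>\<phi>. corr_coloring {0..<j} E L C \<phi>" for j
  proof (induction j)
    case 0
    show ?case by (simp add: corr_coloring_def)
  next
    case (Suc j)
    then obtain \<phi> where "corr_coloring {0..<j} E L C \<phi>" by auto
    then have "\<exists>c. corr_coloring (insert j {0..<j}) E L C (\<phi>(j := c))"
      using Suc.prems few[of j] by (intro corr_coloring_extend[OF ca assms(1,2)]) auto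
    then show ?case
      by (auto simp: atLeast0_lessThan_Suc)
  qed
  then show "\<exists>\<phi>. corr_coloring {0..<n} E L C \<phi>" by blast
qed

lemma card_add_card_le_if_inj_on:
  assumes "inj_on f W" "f ` W \<subseteq> A - S" "S \<subseteq> A" "finite A"
  shows "card W + card S \<le> card A"
proof -
  have "card W \<le> card (A - S)"
    using assms by (intro card_inj_on_le) auto
  also have "\<dots> = card A - card S"
    using assms by (simp add: card_Diff_subset finite_subset)
  moreover have "card S \<le> card A"
    using assms by (intro card_mono)
  ultimately show ?thesis
    by linarith
qed

definition cyclic_shift :: "nat \<Rightarrow> (nat \<times> nat) set" where
  "cyclic_shift k = {(c, Suc c mod k) | c. c < k}"

lemma partial_matching_cyclic_shift: "partial_matching {0..<k} {0..<k} (cyclic_shift k)"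
  unfolding partial_matching_def cyclic_shift_def inj_on_def
  by (auto simp: mod_Suc split: if_splits)

definition twisted_identity ::
    "nat \<Rightarrow> 'a \<Rightarrow> 'a set \<Rightarrow> (nat \<times> nat) set \<Rightarrow> 'a \<Rightarrow> 'a \<Rightarrow> (nat \<times> nat) set" where
  "twisted_identity k w T M x y =
     (if x = w \<and> y \<in> T then M else if y = w \<and> x \<in> T then M\<inverse> else Id_on {0..<k})"

lemma corr_assignment_twisted_identity:
  assumes "w \<notin> T" "partial_matching {0..<k} {0..<k} M"
  shows "corr_assignment V E k (\<lambda>_. {0..<k}) (twisted_identity k w T M)"
  using assms partial_matching_converse[OF assms(2)] partial_matching_Id_on[of "{0..<k}"]
  by (auto simp: corr_assignment_iff_partial_matching twisted_identity_def)

lemma Gn_adj_iff: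
  assumes "n = 2*m+2"
  shows "Gn_adj n x y \<longleftrightarrow> x < n \<and> y < n \<and> x \<noteq> y \<and>
    (x \<le> 1 \<and> 2 \<le> y \<or> y \<le> 1 \<and> 2 \<le> x \<or> 2 \<le> x \<and> x < m+2 \<and> 2 \<le> y \<and> y < m+2 \<or>
     m+2 \<le> x \<and> m+2 \<le> y)"
  unfolding Gn_adj_def Let_def assms by auto

lemma Gn_corr_colorable:
  assumes "n = 2*m+2"
  shows "corr_colorable {0..<n} (Gn_adj n) (m+2)"
proof (rule corr_colorable_greedy)
  note adj = Gn_adj_iff[OF assms]
  show "symp (Gn_adj n)" "irreflp (Gn_adj n)"
    by (auto intro!: sympI irreflpI simp: adj)
  fix x assume x: "x < n"
  show "card {y. y < x \<and> Gn_adj n x y} < m+2"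
  proof (cases "x < m+2")
    case True
    have "card {y. y < x \<and> Gn_adj n x y} \<le> card {..<x}"
      by (intro card_mono) auto
    with True show ?thesis by simp
  next
    case False
    then have "{y. y < x \<and> Gn_adj n x y} \<subseteq> {0, 1} \<union> {m+2..<x}"
      by (auto simp: adj)
    then have "card {y. y < x \<and> Gn_adj n x y} \<le> card ({0, 1} \<union> {m+2..<x})"
      by (intro card_mono) auto
    also have "\<dots> \<le> 2 + (x - (m+2))"
      using card_Un_le[of "{0, 1}" "{m+2..<x}"] by simp
    finally show ?thesis
      using x False assms by linarith
  qed
qed

lemma Gn_twisted_coloring_constraints:
  assumes n: "n = 2*m+2"
    and \<phi>: "corr_coloring {0..<n} (Gn_adj n) (\<lambda>_. {0..<k})
               (twisted_identity k 1 {m+2..<n} (cyclic_shift k)) \<phi>"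
  shows "inj_on \<phi> {2..<m+2}" "inj_on \<phi> {m+2..<n}"
    and "\<phi> ` {2..<m+2} \<subseteq> {0..<k} - {\<phi> 0, \<phi> 1}"
    and "\<phi> ` {m+2..<n} \<subseteq> {0..<k} - {\<phi> 0, Suc (\<phi> 1) mod k}"
    and "\<phi> 0 < k" "\<phi> 1 < k"
proof -
  note adj = Gn_adj_iff[OF n]
  have bound: "m + 2 \<le> n"
    using n by simp
  let ?C = "twisted_identity k 1 {m+2..<n} (cyclic_shift k)"
  have range: "\<phi> x < k" if "x < n" for x
    using \<phi> that by (auto simp: corr_coloring_def)
  have proper: "\<phi> x \<noteq> \<phi> y" if "Gn_adj n x y" "x \<noteq> 1" "y \<noteq> 1" for x y
    using that range[of y] corr_coloring_Id_on_neq[OF \<phi>, of x y "{0..<k}"]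
    by (auto simp: adj twisted_identity_def)
  have avoids_v: "\<phi> x \<noteq> \<phi> 1" if "x \<in> {2..<m+2}" for x
    using that bound range[of 1] corr_coloring_Id_on_neq[OF \<phi>, of x 1 "{0..<k}"]
    by (auto simp: adj twisted_identity_def)
  have shifted: "\<phi> x \<noteq> Suc (\<phi> 1) mod k" if "x \<in> {m+2..<n}" for x
  proof
    assume "\<phi> x = Suc (\<phi> 1) mod k"
    then have "(\<phi> x, \<phi> 1) \<in> ?C x 1"
      using that bound range[of 1] by (auto simp: twisted_identity_def cyclic_shift_def)
    moreover have "Gn_adj n x 1"
      using that by (auto simp: adj)
    ultimately show False
      using \<phi> that by (auto simp: corr_coloring_def)
  qed
  have clique_inj: "inj_on \<phi> Q"
    if "1 \<notin> Q" "\<And>x y. x \<in> Q \<Longrightarrow> y \<in> Q \<Longrightarrow> x \<noteq> y \<Longrightarrow> Gn_adj n x y" for Q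
  proof (rule inj_onI, rule ccontr)
    fix x y assume "x \<in> Q" "y \<in> Q" "\<phi> x = \<phi> y" "x \<noteq> y"
    then show False
      using proper[of x y] that by auto
  qed
  show "inj_on \<phi> {2..<m+2}" "inj_on \<phi> {m+2..<n}"
    using bound by (auto intro!: clique_inj simp: adj)
  show "\<phi> ` {2..<m+2} \<subseteq> {0..<k} - {\<phi> 0, \<phi> 1}"
    using proper[of _ 0] avoids_v range bound by (auto simp: adj)
  show "\<phi> ` {m+2..<n} \<subseteq> {0..<k} - {\<phi> 0, Suc (\<phi> 1) mod k}"
    using proper[of _ 0] shifted range bound by (auto simp: adj)
  show "\<phi> 0 < k" "\<phi> 1 < k"
    using range bound by simp_all
qed

lemma Gn_not_corr_colorable:
  assumes n: "n = 2*m+2" and "1 \<le> m" "k \<le> m + 1"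
  shows "\<not> corr_colorable {0..<n} (Gn_adj n) k"
proof
  have "corr_assignment {0..<n} (Gn_adj n) k (\<lambda>_. {0..<k})
          (twisted_identity k 1 {m+2..<n} (cyclic_shift k))"
    using n by (intro corr_assignment_twisted_identity) (auto simp: partial_matching_cyclic_shift)
  moreover assume "corr_colorable {0..<n} (Gn_adj n) k"
  ultimately obtain \<phi> where "corr_coloring {0..<n} (Gn_adj n) (\<lambda>_. {0..<k})
                               (twisted_identity k 1 {m+2..<n} (cyclic_shift k)) \<phi>"
    unfolding corr_colorable_def by blast
  note constraints = Gn_twisted_coloring_constraints[OF n this]
  have "card {2..<m+2} + card {\<phi> 0, \<phi> 1} \<le> card {0..<k}"
    using constraints by (intro card_add_card_le_if_inj_on) auto
  then have "\<phi> 1 = \<phi> 0" "k = m + 1"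
    using assms(3) by (cases "\<phi> 1 = \<phi> 0"; simp)+
  have "card {m+2..<n} + card {\<phi> 0, Suc (\<phi> 0) mod k} \<le> card {0..<k}"
    using constraints \<open>\<phi> 1 = \<phi> 0\<close> by (intro card_add_card_le_if_inj_on) auto
  moreover have "Suc (\<phi> 0) mod k \<noteq> \<phi> 0"
    using constraints(5) \<open>k = m + 1\<close> \<open>1 \<le> m\<close> by (auto simp: mod_Suc)
  ultimately show False
    using n \<open>k = m + 1\<close> by simp
qed

theorem theorem3:
  fixes n :: nat
  assumes "even n" and "n \<ge> 4"
  shows "chi_DP (Gn_verts n) (Gn_adj n) = n div 2 + 1"
proof -
  define m where "m = n div 2 - 1"
  have n: "n = 2*m+2" and "1 \<le> m"
    using assms by (auto simp: m_def elim!: evenE)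
  have "(LEAST k. corr_colorable {0..<n} (Gn_adj n) k) = m+2"
  proof (rule Least_equality)
    show "corr_colorable {0..<n} (Gn_adj n) (m+2)"
      using Gn_corr_colorable[OF n] .
    show "m+2 \<le> k" if "corr_colorable {0..<n} (Gn_adj n) k" for k
      using that Gn_not_corr_colorable[OF n \<open>1 \<le> m\<close>, of k] by linarith
  qed
  then show ?thesis
    unfolding chi_DP_def Gn_verts_def using n by simp
qed

end
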